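(* Let $0<b<a$, $c=\sqrt{a^2-b^2}$, and let $h>0$ be defined by $\sinh(h/2)=c/b$ (equivalently $\cosh(h/2)=a/b$, $\tanh(h/2)=c/a$). For $\lambda\in(0,b)$ let the modulus $k\in(0,1)$ be given by $k^2=(a^2-b^2)/(a^2-\lambda^2)$, let $K=K(k)$, $K'=K(\sqrt{1-k^2})$, let $\delta\in(0,2K)$ be given by $\operatorname{sn}(\delta/2,k)=\lambda/b$, and set $\zeta=2K-\delta\in(0,2K)$. Let $\tilde q_0(t)=(a\operatorname{sn}(t,k),\,b\operatorname{cn}(t,k))$ and $\hat q_0(s)=(a\tanh s,\,b\operatorname{sech} s)$. Then \[\lim_{\lambda\to b^-}k=1,\quad \lim_{\lambda\to b^-}K=+\infty,\quad \lim_{\lambda\to b^-}K'=\pi/2,\quad \lim_{\lambda\to b^-}\zeta=h,\] and moreover \[\lim_{\lambda\to b^-}\tilde q_0(t)=\hat q_0(t),\qquad \lim_{\lambda\to b^-}\tilde q_0(t\pm\delta)=-\hat q_0(t\mp h),\] where both limits are uniform on compact subsets of $\mathbb{R}$, but not uniform on $\mathbb{R}$.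
   Context: $K(k)=\int_0^{\pi/2}(1-k^2\sin^2\phi)^{-1/2}\,d\phi$ is the complete elliptic integral of the first kind. The amplitude $\varphi=\operatorname{am}(t,k)$ is defined by $t=\int_0^\varphi(1-k^2\sin^2\phi)^{-1/2}d\phi$, and $\operatorname{sn}(t,k)=\sin\varphi$, $\operatorname{cn}(t,k)=\cos\varphi$ are the Jacobian elliptic sine and cosine. *)

theory Defs
  imports "HOL-Analysis.Analysis"
begin

definition ell_integrand :: "real \<Rightarrow> real \<Rightarrow> real" where
  "ell_integrand k \<phi> = 1 / sqrt (1 - k\<^sup>2 * (sin \<phi>)\<^sup>2)"

definition ellK :: "real \<Rightarrow> real" where
  "ellK k = integral {0..pi/2} (ell_integrand k)"

definition ellF :: "real \<Rightarrow> real \<Rightarrow> real" where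
  "ellF k \<phi> = (if 0 \<le> \<phi> then integral {0..\<phi>} (ell_integrand k)
                 else - integral {\<phi>..0} (ell_integrand k))"

text \<open>Jacobi amplitude: am(t,k) is the phi with F(phi,k) = t (unique for 0 <= k < 1).\<close>
definition jam :: "real \<Rightarrow> real \<Rightarrow> real" where
  "jam t k = (THE \<phi>. ellF k \<phi> = t)"

definition jsn :: "real \<Rightarrow> real \<Rightarrow> real" where
  "jsn t k = sin (jam t k)"

definition jcn :: "real \<Rightarrow> real \<Rightarrow> real" where
  "jcn t k = cos (jam t k)"

end

theory Submission
  imports Defs
begin

text \<open>As \<open>k \<rightarrow> 1\<close> the integrand of \<open>F(\<phi>, k)\<close> tends to \<open>sec \<phi>\<close>, whose primitive is the
  inverse of the Gudermannian \<open>gd t = arctan (sinh t)\<close>. Quantitatively, substituting \<open>\<phi> = gd s\<close>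
  gives \<open>|F(gd t, k) - t| \<le> k'\<^sup>2 sinh\<^sup>2 T \<cdot> T\<close> for \<open>|t| \<le> T\<close>, and since the amplitude is
  1-Lipschitz in \<open>t\<close> this makes \<open>am(t, k) \<rightarrow> gd t\<close> uniformly on compacts; composing with the
  Lipschitz map \<open>\<phi> \<mapsto> (a sin \<phi>, b cos \<phi>)\<close> yields \<open>sn \<rightarrow> tanh\<close> and \<open>cn \<rightarrow> sech\<close>, and
  \<open>K \<ge> F(gd T, k) \<rightarrow> T\<close> gives \<open>K \<rightarrow> \<infinity>\<close>.
  For the shifted orbits, \<open>t + \<delta> = (t - \<zeta>) + 2K\<close> and \<open>t + \<zeta> = (t - \<delta>) + 2K\<close>, and the half
  period \<open>2K\<close> flips the signs of \<open>sn\<close> and \<open>cn\<close>. Jacobi's complementary-argument relation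
  shows \<open>\<zeta>/2 = K - \<delta>/2 = F(gd \<tau>, k)\<close> with \<open>sinh \<tau> = \<surd>(a\<^sup>2 - \<lambda>\<^sup>2)/\<lambda> \<rightarrow> c/b = sinh (h/2)\<close>, hence \<open>\<zeta> \<rightarrow> h\<close>.
  Uniformity fails on \<open>\<real>\<close> because \<open>sn\<close> returns to \<open>-1\<close> at \<open>3K\<close>, where \<open>tanh\<close> is positive.\<close>

section \<open>The incomplete elliptic integral and the amplitude\<close>

lemma ell_radicand_bounds:
  fixes k x :: real
  assumes "\<bar>k\<bar> < 1"
  shows "0 < 1 - k\<^sup>2" "1 - k\<^sup>2 \<le> 1 - k\<^sup>2 * (sin x)\<^sup>2" "1 - k\<^sup>2 * (sin x)\<^sup>2 \<le> 1"
proof -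
  show "0 < 1 - k\<^sup>2" using assms by (simp add: abs_square_less_1)
  show "1 - k\<^sup>2 \<le> 1 - k\<^sup>2 * (sin x)\<^sup>2"
    using sin_squared_eq[of x] by (simp add: mult_left_le)
  show "1 - k\<^sup>2 * (sin x)\<^sup>2 \<le> 1" by simp
qed

lemma ell_integrand_bounds:
  assumes "\<bar>k\<bar> < 1"
  shows "1 \<le> ell_integrand k x \<and> ell_integrand k x \<le> 1 / sqrt (1 - k\<^sup>2)"
  using ell_radicand_bounds(1)[OF assms] ell_radicand_bounds(2,3)[OF assms, of x] unfolding ell_integrand_def
  by (auto simp: frac_le divide_simps)

lemma continuous_on_ell_integrand:
  assumes "\<bar>k\<bar> < 1"
  shows "continuous_on S (ell_integrand k)"
  unfolding ell_integrand_def
  using ell_radicand_bounds[OF assms] by (intro continuous_intros) (smt (verit) real_sqrt_gt_zero)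

lemma DERIV_ellF:
  assumes "\<bar>k\<bar> < 1"
  shows "(ellF k has_real_derivative ell_integrand k x) (at x)"
proof -
  define R where "R = \<bar>x\<bar> + 1"
  define f where "f = ell_integrand k"
  have cf: "continuous_on S f" for S
    unfolding f_def using continuous_on_ell_integrand[OF assms] .
  have int: "f integrable_on {u..v}" for u v by (rule integrable_continuous_real[OF cf])
  define G where "G u = integral {-R..u} f - integral {-R..0} f" for u
  have eq: "ellF k u = G u" if "u \<in> {-R<..<R}" for u
  proof (cases "0 \<le> u")
    case True
    have "integral {-R..0} f + integral {0..u} f = integral {-R..u} f"
      by (rule Henstock_Kurzweil_Integration.integral_combine) (use True that R_def int in auto)
    then show ?thesis using True unfolding G_def ellF_def f_def by simp
  next
    case False
    have "integral {-R..u} f + integral {u..0} f = integral {-R..0} f"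
      by (rule Henstock_Kurzweil_Integration.integral_combine) (use False that R_def int in auto)
    then show ?thesis using False unfolding G_def ellF_def f_def by simp
  qed
  have x: "x \<in> {-R<..<R}" unfolding R_def by auto
  have "((\<lambda>u. integral {-R..u} f) has_real_derivative f x) (at x within {-R..R})"
    by (rule integral_has_real_derivative) (use cf x in auto)
  then have "((\<lambda>u. integral {-R..u} f) has_real_derivative f x) (at x)"
    using at_within_Icc_at[of "-R" x R] x by simp
  then have "(G has_real_derivative f x) (at x)"
    unfolding G_def by (auto intro!: derivative_eq_intros)
  then show ?thesis unfolding f_def
    by (rule has_field_derivative_transform_within_open[of G _ _ "{-R<..<R}"]) (use x eq in auto)
qed

lemma ellF_0 [simp]: "ellF k 0 = 0"
  unfolding ellF_def by simp

lemma ellF_pi_half: "ellF k (pi/2) = ellK k"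
  unfolding ellF_def ellK_def by simp

lemma ellF_diff_bounds:
  assumes "\<bar>k\<bar> < 1" "x \<le> y"
  shows "y - x \<le> ellF k y - ellF k x \<and> ellF k y - ellF k x \<le> (y - x) / sqrt (1 - k\<^sup>2)"
proof (cases "x = y")
  case False
  then have "x < y" using assms by simp
  from MVT2[OF this DERIV_ellF[OF assms(1)]] obtain z where
    z: "ellF k y - ellF k x = (y - x) * ell_integrand k z" by blast
  have "y - x \<le> (y - x) * ell_integrand k z"
    using ell_integrand_bounds[OF assms(1), of z] \<open>x < y\<close> by (simp add: mult_le_cancel_left1)
  moreover have "(y - x) * ell_integrand k z \<le> (y - x) * (1 / sqrt (1 - k\<^sup>2))"
    using ell_integrand_bounds[OF assms(1), of z] \<open>x < y\<close> by (intro mult_left_mono) auto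
  ultimately show ?thesis using z by simp
qed simp

lemma strict_mono_ellF:
  assumes "\<bar>k\<bar> < 1"
  shows "strict_mono (ellF k)"
proof (rule strict_monoI)
  fix x y :: real
  assume "x < y"
  with ellF_diff_bounds[OF assms, of x y] show "ellF k x < ellF k y" by simp
qed

lemma ellF_jam:
  assumes "\<bar>k\<bar> < 1"
  shows "ellF k (jam t k) = t"
proof -
  have "ellF k (-\<bar>t\<bar>) \<le> t" "t \<le> ellF k \<bar>t\<bar>"
    using ellF_diff_bounds[OF assms, of "-\<bar>t\<bar>" 0] ellF_diff_bounds[OF assms, of 0 "\<bar>t\<bar>"] by auto
  moreover have "isCont (ellF k) x" for x
    using DERIV_ellF[OF assms] by (rule DERIV_isCont)
  ultimately obtain \<phi> where "ellF k \<phi> = t"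
    using IVT[of "ellF k" "-\<bar>t\<bar>" t "\<bar>t\<bar>"] by auto
  moreover have "inj (ellF k)"
    using strict_mono_ellF[OF assms] by (rule strict_mono_imp_inj_on)
  ultimately have "\<exists>!\<phi>. ellF k \<phi> = t" by (auto dest: injD)
  then show ?thesis unfolding jam_def by (rule theI')
qed

lemma jam_ellF:
  assumes "\<bar>k\<bar> < 1"
  shows "jam (ellF k \<phi>) k = \<phi>"
  using strict_mono_imp_inj_on[OF strict_mono_ellF[OF assms]] ellF_jam[OF assms]
  by (auto dest: injD)

lemma abs_jam_diff_le:
  assumes "\<bar>k\<bar> < 1"
  shows "\<bar>jam t k - x\<bar> \<le> \<bar>t - ellF k x\<bar>"
  using ellF_diff_bounds[OF assms, of x "jam t k"] ellF_diff_bounds[OF assms, of "jam t k" x]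
  by (cases "x \<le> jam t k") (auto simp: ellF_jam[OF assms])

lemma ellF_pi_minus:
  assumes "\<bar>k\<bar> < 1"
  shows "ellF k (pi - x) + ellF k x = 2 * ellK k"
proof -
  have "DERIV (\<lambda>x. ellF k (pi - x) + ellF k x) x :> 0" for x
  proof -
    have "DERIV (\<lambda>x. ellF k (pi - x) + ellF k x) x :> ell_integrand k (pi - x) * (-1) + ell_integrand k x"
      by (intro DERIV_add DERIV_chain2[OF DERIV_ellF[OF assms]] DERIV_ellF[OF assms])
         (auto intro!: derivative_eq_intros)
    then show ?thesis by (simp add: ell_integrand_def)
  qed
  then have "ellF k (pi - x) + ellF k x = ellF k (pi - pi/2) + ellF k (pi/2)"
    by (intro DERIV_isconst_all) blast
  then show ?thesis by (simp add: ellF_pi_half)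
qed

lemma ellF_add_pi:
  assumes "\<bar>k\<bar> < 1"
  shows "ellF k (x + pi) = ellF k x + 2 * ellK k"
proof -
  have "DERIV (\<lambda>x. ellF k (x + pi) - ellF k x) x :> 0" for x
  proof -
    have "DERIV (\<lambda>x. ellF k (x + pi) - ellF k x) x :> ell_integrand k (x + pi) * 1 - ell_integrand k x"
      by (intro DERIV_diff DERIV_chain2[OF DERIV_ellF[OF assms]] DERIV_ellF[OF assms])
         (auto intro!: derivative_eq_intros)
    then show ?thesis by (simp add: ell_integrand_def)
  qed
  then have "ellF k (x + pi) - ellF k x = ellF k (0 + pi) - ellF k 0"
    by (intro DERIV_isconst_all) blast
  then show ?thesis using ellF_pi_minus[OF assms, of 0] by simp
qed

lemma ellF_minus_pi_half:
  assumes "\<bar>k\<bar> < 1"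
  shows "ellF k (- (pi/2)) = - ellK k"
  using ellF_add_pi[OF assms, of "- (pi/2)"] by (simp add: ellF_pi_half)

lemma ellK_bounds:
  assumes "\<bar>k\<bar> < 1"
  shows "pi/2 \<le> ellK k \<and> ellK k \<le> (pi/2) / sqrt (1 - k\<^sup>2)"
  using ellF_diff_bounds[OF assms, of 0 "pi/2"] by (simp add: ellF_pi_half)

lemma jam_add_two_ellK:
  assumes "\<bar>k\<bar> < 1"
  shows "jam (t + 2 * ellK k) k = jam t k + pi"
  by (metis ellF_add_pi[OF assms] ellF_jam[OF assms] jam_ellF[OF assms])

lemma jsn_add_two_ellK: "\<bar>k\<bar> < 1 \<Longrightarrow> jsn (t + 2 * ellK k) k = - jsn t k"
  by (simp add: jsn_def jam_add_two_ellK)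

lemma jcn_add_two_ellK: "\<bar>k\<bar> < 1 \<Longrightarrow> jcn (t + 2 * ellK k) k = - jcn t k"
  by (simp add: jcn_def jam_add_two_ellK)

lemma jsn_ellK: "\<bar>k\<bar> < 1 \<Longrightarrow> jsn (ellK k) k = 1"
  by (metis ellF_pi_half jam_ellF jsn_def sin_pi_half)

lemma jam_eq_arcsin_jsn:
  assumes "\<bar>k\<bar> < 1" "\<bar>t\<bar> \<le> ellK k"
  shows "jam t k = arcsin (jsn t k)"
proof -
  have "ellF k (- (pi/2)) \<le> ellF k (jam t k)" "ellF k (jam t k) \<le> ellF k (pi/2)"
    using assms by (auto simp: ellF_jam ellF_minus_pi_half ellF_pi_half)
  then have "- (pi/2) \<le> jam t k" "jam t k \<le> pi/2"
    by (simp_all add: strict_mono_less_eq[OF strict_mono_ellF[OF assms(1)]])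
  then show ?thesis unfolding jsn_def by (simp add: arcsin_sin)
qed

lemma ellF_arcsin_jsn:
  assumes "\<bar>k\<bar> < 1" "\<bar>t\<bar> \<le> ellK k"
  shows "ellF k (arcsin (jsn t k)) = t"
  using ellF_jam[OF assms(1)] by (simp add: jam_eq_arcsin_jsn[OF assms, symmetric])

section \<open>The complementary-argument relation\<close>

lemma ell_integrand_complement:
  fixes k x :: real
  assumes k: "\<bar>k\<bar> < 1" and c: "0 < cos x"
  defines "k' \<equiv> sqrt (1 - k\<^sup>2)"
  shows "ell_integrand k (pi/2 - arctan (k' * tan x)) * (k' / (cos x)\<^sup>2 / (1 + (k' * tan x)\<^sup>2))
    = ell_integrand k x"
proof -
  define X where "X = k' * tan x"
  define Q where "Q = sqrt (1 + X\<^sup>2)"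
  have kp: "k' > 0" "k'\<^sup>2 = 1 - k\<^sup>2" unfolding k'_def using ell_radicand_bounds(1)[OF k] by auto
  have Q: "Q > 0" "Q\<^sup>2 = 1 + X\<^sup>2" unfolding Q_def by (auto simp: add_pos_nonneg)
  have sc: "(sin x)\<^sup>2 + (cos x)\<^sup>2 = 1" by simp
  have A: "1 - k\<^sup>2 * (sin x)\<^sup>2 = (cos x * Q)\<^sup>2"
  proof -
    have "(cos x * Q)\<^sup>2 = (cos x)\<^sup>2 + k'\<^sup>2 * (sin x)\<^sup>2"
      unfolding power_mult_distrib Q(2) X_def tan_def using c
      by (simp add: field_simps power2_eq_square)
    then show ?thesis using kp(2) sc by (simp add: algebra_simps)
  qed
  have sin_chi: "sin (pi/2 - arctan X) = 1 / Q"
    unfolding Q_def by (simp add: sin_diff cos_arctan)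
  have B: "1 - k\<^sup>2 * (sin (pi/2 - arctan X))\<^sup>2 = (k' / (cos x * Q))\<^sup>2"
  proof -
    have "X\<^sup>2 = k'\<^sup>2 * (sin x)\<^sup>2 / (cos x)\<^sup>2"
      unfolding X_def tan_def by (simp add: power_mult_distrib power_divide)
    then have "k'\<^sup>2 + X\<^sup>2 = k'\<^sup>2 * ((cos x)\<^sup>2 + (sin x)\<^sup>2) / (cos x)\<^sup>2"
      using c by (simp add: field_simps flip: distrib_left)
    then have "Q\<^sup>2 - k\<^sup>2 = k'\<^sup>2 / (cos x)\<^sup>2"
      using Q(2) kp(2) sc by (simp add: add.commute)
    moreover have "1 - k\<^sup>2 * (1 / Q)\<^sup>2 = (Q\<^sup>2 - k\<^sup>2) / Q\<^sup>2"
      using Q(1) by (simp add: diff_divide_distrib power_divide)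
    ultimately show ?thesis
      unfolding sin_chi by (simp add: power_mult_distrib power_divide)
  qed
  have "ell_integrand k x = 1 / (cos x * Q)"
    unfolding ell_integrand_def A using c Q by simp
  moreover have "ell_integrand k (pi/2 - arctan X) = cos x * Q / k'"
    unfolding ell_integrand_def B using c Q kp by simp
  ultimately show ?thesis
    unfolding X_def[symmetric] Q(2)[symmetric] using c Q(1) kp(1)
    by (simp add: field_simps power2_eq_square)
qed

text \<open>Jacobi's complementary-argument relation: the substitution
  \<open>\<chi> = \<pi>/2 - arctan (k' tan \<phi>)\<close> maps \<open>[0, \<phi>]\<close> onto \<open>[\<chi>, \<pi>/2]\<close> and preserves \<open>dF\<close>.\<close>
lemma ellF_complement:
  assumes k: "\<bar>k\<bar> < 1" and \<phi>: "\<bar>\<phi>\<bar> < pi/2"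
  shows "ellF k \<phi> + ellF k (pi/2 - arctan (sqrt (1 - k\<^sup>2) * tan \<phi>)) = ellK k"
proof -
  define k' where "k' = sqrt (1 - k\<^sup>2)"
  define G where "G x = ellF k x + ellF k (pi/2 - arctan (k' * tan x))" for x
  have "G \<phi> = G 0"
  proof (rule DERIV_isconst3[where a="-pi/2" and b="pi/2" and f=G])
    fix x :: real assume "x \<in> {-pi/2<..<pi/2}"
    then have c: "0 < cos x" by (auto intro: cos_gt_zero_pi)
    have "inverse (1 + (k' * tan x)\<^sup>2) * (k' * inverse ((cos x)\<^sup>2))
        = k' / (cos x)\<^sup>2 / (1 + (k' * tan x)\<^sup>2)"
      by (simp add: field_simps)
    moreover have "DERIV (\<lambda>x. pi/2 - arctan (k' * tan x)) x
        :> 0 - inverse (1 + (k' * tan x)\<^sup>2) * (k' * inverse ((cos x)\<^sup>2))"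
      using c by (intro DERIV_diff DERIV_const DERIV_chain2[OF DERIV_arctan] DERIV_cmult DERIV_tan) simp
    ultimately have "DERIV (\<lambda>x. pi/2 - arctan (k' * tan x)) x
        :> - (k' / (cos x)\<^sup>2 / (1 + (k' * tan x)\<^sup>2))"
      by simp
    then have "DERIV G x :> ell_integrand k x
        + ell_integrand k (pi/2 - arctan (k' * tan x)) * - (k' / (cos x)\<^sup>2 / (1 + (k' * tan x)\<^sup>2))"
      unfolding G_def by (intro DERIV_add DERIV_ellF[OF k] DERIV_chain2[OF DERIV_ellF[OF k]])
    then show "DERIV G x :> 0"
      using ell_integrand_complement[OF k c] unfolding k'_def by simp
  qed (use \<phi> in auto)
  then show ?thesis by (simp add: G_def k'_def ellF_pi_half)
qed

section \<open>Comparison with the Gudermannian as \<open>k \<rightarrow> 1\<close>\<close>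

lemma abs_diff_le_of_DERIV_bound:
  fixes f f' :: "real \<Rightarrow> real"
  assumes "\<And>t. DERIV f t :> f' t" "\<And>t. \<bar>f' t\<bar> \<le> B"
  shows "\<bar>f x - f y\<bar> \<le> B * \<bar>x - y\<bar>"
  using field_differentiable_bound[of UNIV f f' B x y] assms by simp

definition gd :: "real \<Rightarrow> real" where
  "gd t = arctan (sinh t)"

lemma sin_gd: "sin (gd t) = tanh t"
  and cos_gd: "cos (gd t) = 1 / cosh t"
proof -
  have "sqrt (1 + (sinh t)\<^sup>2) = cosh t"
    by (metis add.commute cosh_real_nonneg cosh_square_eq real_sqrt_abs abs_of_nonneg)
  then show "sin (gd t) = tanh t" "cos (gd t) = 1 / cosh t"
    unfolding gd_def sin_arctan cos_arctan by (simp_all add: tanh_def)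
qed

lemma gd_0 [simp]: "gd 0 = 0"
  unfolding gd_def by simp

lemma gd_less_pi_half: "gd t < pi/2"
  unfolding gd_def by (rule arctan_ubound)

lemma gd_arsinh: "gd (arsinh x) = arctan x"
  unfolding gd_def by simp

lemma DERIV_gd: "DERIV gd t :> 1 / cosh t"
proof -
  have "DERIV gd t :> inverse (1 + (sinh t)\<^sup>2) * cosh t"
    unfolding gd_def by (intro DERIV_chain2[OF DERIV_arctan]) (auto intro!: derivative_eq_intros)
  moreover have "1 + (sinh t)\<^sup>2 = (cosh t)\<^sup>2" using cosh_square_eq[of t] by simp
  ultimately show ?thesis by (simp add: field_simps power2_eq_square)
qed


lemma abs_gd_diff_le: "\<bar>gd x - gd y\<bar> \<le> \<bar>x - y\<bar>"
  using abs_diff_le_of_DERIV_bound[OF DERIV_gd, of 1 x y] cosh_real_ge_1 by simp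

lemma ell_integrand_gd:
  "ell_integrand k (gd s) * (1 / cosh s) = 1 / sqrt (1 + (1 - k\<^sup>2) * (sinh s)\<^sup>2)"
proof -
  have c: "cosh s > 0" by simp
  have "(cosh s)\<^sup>2 * (1 - k\<^sup>2 * (tanh s)\<^sup>2) = (cosh s)\<^sup>2 - k\<^sup>2 * (sinh s)\<^sup>2"
    using c by (simp add: tanh_def field_simps power2_eq_square)
  then have "1 + (1 - k\<^sup>2) * (sinh s)\<^sup>2 = (cosh s)\<^sup>2 * (1 - k\<^sup>2 * (tanh s)\<^sup>2)"
    using cosh_square_eq[of s] by (simp add: algebra_simps)
  then have "sqrt (1 + (1 - k\<^sup>2) * (sinh s)\<^sup>2) = cosh s * sqrt (1 - k\<^sup>2 * (tanh s)\<^sup>2)"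
    by (simp add: real_sqrt_mult)
  then show ?thesis unfolding ell_integrand_def sin_gd by simp
qed

lemma abs_inverse_sqrt_one_plus_minus_one:
  fixes x :: real
  assumes "0 \<le> x"
  shows "\<bar>1 / sqrt (1 + x) - 1\<bar> \<le> x"
proof -
  have s1: "1 \<le> sqrt (1 + x)" using assms by simp
  have "sqrt (1 + x) \<le> sqrt ((1 + x)\<^sup>2)"
    using assms by (intro real_sqrt_le_mono) (simp add: power2_eq_square)
  then have "1 / (1 + x) \<le> 1 / sqrt (1 + x)" using s1 assms by (intro divide_left_mono) auto
  moreover have "1 - x \<le> 1 / (1 + x)"
    using assms by (simp add: le_divide_eq algebra_simps)
  moreover have "1 / sqrt (1 + x) \<le> 1" using s1 by simp
  ultimately show ?thesis by linarith
qed

lemma abs_ellF_gd_minus_le: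
  fixes k t T :: real
  assumes "\<bar>k\<bar> < 1" "\<bar>t\<bar> \<le> T"
  shows "\<bar>ellF k (gd t) - t\<bar> \<le> (1 - k\<^sup>2) * (sinh T)\<^sup>2 * T"
proof -
  define D where "D s = ellF k (gd s) - s" for s
  have k2: "0 \<le> 1 - k\<^sup>2" using ell_radicand_bounds(1)[OF assms(1)] by simp
  have "DERIV D s :> 1 / sqrt (1 + (1 - k\<^sup>2) * (sinh s)\<^sup>2) - 1" for s
  proof -
    have "DERIV D s :> ell_integrand k (gd s) * (1 / cosh s) - 1"
      unfolding D_def by (intro DERIV_diff DERIV_chain2[OF DERIV_ellF[OF assms(1)] DERIV_gd]) simp
    then show ?thesis by (simp only: ell_integrand_gd)
  qed
  moreover have "\<bar>1 / sqrt (1 + (1 - k\<^sup>2) * (sinh s)\<^sup>2) - 1\<bar> \<le> (1 - k\<^sup>2) * (sinh T)\<^sup>2"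
    if "s \<in> {-T..T}" for s
  proof -
    have "\<bar>sinh s\<bar> \<le> sinh T"
      using that sinh_real_abs[of s] sinh_real_le_iff[of "\<bar>s\<bar>" T] by (simp add: abs_le_iff)
    then have "(sinh s)\<^sup>2 \<le> (sinh T)\<^sup>2"
      by (metis power2_abs abs_ge_zero power_mono)
    then have "(1 - k\<^sup>2) * (sinh s)\<^sup>2 \<le> (1 - k\<^sup>2) * (sinh T)\<^sup>2"
      using k2 by (rule mult_left_mono)
    then show ?thesis
      using abs_inverse_sqrt_one_plus_minus_one[of "(1 - k\<^sup>2) * (sinh s)\<^sup>2"] k2 by simp
  qed
  ultimately have "norm (D t - D 0) \<le> (1 - k\<^sup>2) * (sinh T)\<^sup>2 * norm (t - 0)"
    using assms(2) by (intro field_differentiable_bound[of "{-T..T}"])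
      (auto intro: has_field_derivative_at_within)
  also have "\<dots> \<le> (1 - k\<^sup>2) * (sinh T)\<^sup>2 * T"
    using assms(2) k2 by (intro mult_left_mono) auto
  finally show ?thesis by (simp add: D_def)
qed

lemma uniform_limit_ellF_gd:
  fixes k :: "'a \<Rightarrow> real"
  assumes "(k \<longlongrightarrow> 1) F" "eventually (\<lambda>n. \<bar>k n\<bar> < 1) F"
  shows "uniform_limit {-T..T} (\<lambda>n t. ellF (k n) (gd t)) (\<lambda>t. t) F"
proof (rule uniform_limitI)
  fix e :: real assume "0 < e"
  have "((\<lambda>n. (1 - (k n)\<^sup>2) * (sinh T)\<^sup>2 * T) \<longlongrightarrow> (1 - 1\<^sup>2) * (sinh T)\<^sup>2 * T) F"
    by (intro tendsto_intros assms(1))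
  then have "eventually (\<lambda>n. (1 - (k n)\<^sup>2) * (sinh T)\<^sup>2 * T < e) F"
    using \<open>0 < e\<close> by (intro order_tendstoD(2)) auto
  with assms(2) show "eventually (\<lambda>n. \<forall>t\<in>{-T..T}. dist (ellF (k n) (gd t)) t < e) F"
  proof eventually_elim
    case (elim n)
    show ?case
      using abs_ellF_gd_minus_le[OF elim(1)] elim(2) by (fastforce simp: dist_real_def abs_le_iff)
  qed
qed

lemma uniform_limit_jam_gd:
  fixes k :: "'a \<Rightarrow> real"
  assumes "(k \<longlongrightarrow> 1) F" "eventually (\<lambda>n. \<bar>k n\<bar> < 1) F"
  shows "uniform_limit {-T..T} (\<lambda>n t. jam t (k n)) gd F"
proof (rule metric_uniform_limit_imp_uniform_limit[OF uniform_limit_ellF_gd[OF assms]])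
  show "eventually (\<lambda>n. \<forall>t\<in>{-T..T}. dist (jam t (k n)) (gd t) \<le> dist (ellF (k n) (gd t)) t) F"
    using assms(2) by eventually_elim (metis abs_jam_diff_le dist_commute dist_real_def)
qed

lemma uniform_limit_jam_shift_gd:
  fixes k s :: "'a \<Rightarrow> real"
  assumes "(k \<longlongrightarrow> 1) F" "eventually (\<lambda>n. \<bar>k n\<bar> < 1) F" "(s \<longlongrightarrow> s0) F" "compact C"
  shows "uniform_limit C (\<lambda>n t. jam (t + s n) (k n)) (\<lambda>t. gd (t + s0)) F"
proof (rule uniform_limitI)
  fix e :: real assume "0 < e"
  obtain R where R: "\<forall>t\<in>C. \<bar>t\<bar> \<le> R"
    using compact_imp_bounded[OF assms(4)] unfolding bounded_iff by auto
  define T where "T = R + \<bar>s0\<bar> + 1"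
  have "eventually (\<lambda>n. \<forall>t\<in>{-T..T}. dist (jam t (k n)) (gd t) < e/2) F"
    using uniform_limitD[OF uniform_limit_jam_gd[OF assms(1,2)] half_gt_zero[OF \<open>0 < e\<close>]] .
  moreover have "eventually (\<lambda>n. dist (s n) s0 < min 1 (e/2)) F"
    using assms(3) \<open>0 < e\<close> by (intro tendstoD) auto
  ultimately show "eventually (\<lambda>n. \<forall>t\<in>C. dist (jam (t + s n) (k n)) (gd (t + s0)) < e) F"
  proof eventually_elim
    case (elim n)
    show ?case
    proof
      fix t assume "t \<in> C"
      then have "t + s n \<in> {-T..T}" using R elim(2) by (auto simp: T_def dist_real_def)
      then have "dist (jam (t + s n) (k n)) (gd (t + s n)) < e/2" using elim(1) by blast
      moreover have "dist (gd (t + s n)) (gd (t + s0)) < e/2"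
        using abs_gd_diff_le[of "t + s n" "t + s0"] elim(2) by (simp add: dist_real_def)
      ultimately show "dist (jam (t + s n) (k n)) (gd (t + s0)) < e"
        using dist_triangle[of "jam (t + s n) (k n)" "gd (t + s0)" "gd (t + s n)"] by linarith
    qed
  qed
qed

lemma tendsto_ellF_gd:
  fixes k \<tau> :: "'a \<Rightarrow> real"
  assumes "(k \<longlongrightarrow> 1) F" "eventually (\<lambda>n. \<bar>k n\<bar> < 1) F" "(\<tau> \<longlongrightarrow> \<tau>0) F"
  shows "((\<lambda>n. ellF (k n) (gd (\<tau> n))) \<longlongrightarrow> \<tau>0) F"
proof (rule tendstoI)
  fix e :: real assume "0 < e"
  define T where "T = \<bar>\<tau>0\<bar> + 1"
  have "eventually (\<lambda>n. \<forall>t\<in>{-T..T}. dist (ellF (k n) (gd t)) t < e/2) F"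
    using uniform_limitD[OF uniform_limit_ellF_gd[OF assms(1,2)] half_gt_zero[OF \<open>0 < e\<close>]] .
  moreover have "eventually (\<lambda>n. dist (\<tau> n) \<tau>0 < min 1 (e/2)) F"
    using assms(3) \<open>0 < e\<close> by (intro tendstoD) auto
  ultimately show "eventually (\<lambda>n. dist (ellF (k n) (gd (\<tau> n))) \<tau>0 < e) F"
  proof eventually_elim
    case (elim n)
    then have "\<tau> n \<in> {-T..T}" by (auto simp: T_def dist_real_def)
    with elim(1) have "dist (ellF (k n) (gd (\<tau> n))) (\<tau> n) < e/2" by blast
    then show ?case
      using elim(2) dist_triangle[of "ellF (k n) (gd (\<tau> n))" \<tau>0 "\<tau> n"] by linarith
  qed
qed

lemma ellK_tendsto_at_top:
  fixes k :: "'a \<Rightarrow> real"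
  assumes "(k \<longlongrightarrow> 1) F" "eventually (\<lambda>n. \<bar>k n\<bar> < 1) F"
  shows "filterlim (\<lambda>n. ellK (k n)) at_top F"
  unfolding filterlim_at_top
proof
  fix Z :: real
  define T where "T = \<bar>Z\<bar> + 1"
  have "eventually (\<lambda>n. \<forall>t\<in>{-T..T}. dist (ellF (k n) (gd t)) t < 1) F"
    using uniform_limitD[OF uniform_limit_ellF_gd[OF assms] zero_less_one] .
  with assms(2) show "eventually (\<lambda>n. Z \<le> ellK (k n)) F"
  proof eventually_elim
    case (elim n)
    have "T \<in> {-T..T}" by (simp add: T_def)
    with elim(2) have "dist (ellF (k n) (gd T)) T < 1" by blast
    then have "T - 1 < ellF (k n) (gd T)" by (simp add: dist_real_def abs_less_iff)
    also have "\<dots> \<le> ellF (k n) (pi/2)"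
      using gd_less_pi_half[of T] strict_mono_less_eq[OF strict_mono_ellF[OF elim(1)]] by simp
    finally show ?case by (simp add: T_def ellF_pi_half)
  qed
qed

lemma ellK_complementary_tendsto:
  fixes k :: "'a \<Rightarrow> real"
  assumes "(k \<longlongrightarrow> 1) F" "eventually (\<lambda>n. \<bar>k n\<bar> < 1) F"
  shows "((\<lambda>n. ellK (sqrt (1 - (k n)\<^sup>2))) \<longlongrightarrow> pi/2) F"
proof (rule tendsto_sandwich[where f="\<lambda>_. pi/2" and h="\<lambda>n. (pi/2) / \<bar>k n\<bar>"])
  have "eventually (\<lambda>n. k n \<noteq> 0) F"
    using tendsto_imp_eventually_ne[OF assms(1)] by simp
  with assms(2) have "eventually (\<lambda>n. pi/2 \<le> ellK (sqrt (1 - (k n)\<^sup>2))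
      \<and> ellK (sqrt (1 - (k n)\<^sup>2)) \<le> (pi/2) / \<bar>k n\<bar>) F"
  proof eventually_elim
    case (elim n)
    have k2: "0 < (k n)\<^sup>2" "(k n)\<^sup>2 < 1"
      using elim abs_square_less_1 by auto
    then have "\<bar>sqrt (1 - (k n)\<^sup>2)\<bar> < 1" "sqrt (1 - (sqrt (1 - (k n)\<^sup>2))\<^sup>2) = \<bar>k n\<bar>"
      by (auto simp: real_sqrt_less_iff)
    then show ?case using ellK_bounds[of "sqrt (1 - (k n)\<^sup>2)"] by simp
  qed
  then show "eventually (\<lambda>n. pi/2 \<le> ellK (sqrt (1 - (k n)\<^sup>2))) F"
    and "eventually (\<lambda>n. ellK (sqrt (1 - (k n)\<^sup>2)) \<le> (pi/2) / \<bar>k n\<bar>) F"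
    by (auto elim: eventually_mono)
  show "((\<lambda>_. pi/2) \<longlongrightarrow> pi/2) F" by simp
  have "((\<lambda>n. (pi/2) / \<bar>k n\<bar>) \<longlongrightarrow> (pi/2) / \<bar>1\<bar>) F"
    by (intro tendsto_intros assms(1)) simp
  then show "((\<lambda>n. (pi/2) / \<bar>k n\<bar>) \<longlongrightarrow> pi/2) F" by simp
qed

section \<open>The orbits on the ellipse\<close>

lemma uniform_limit_uminus_cong:
  fixes f f' :: "'a \<Rightarrow> 'b \<Rightarrow> 'c::real_normed_vector"
  assumes "eventually (\<lambda>n. \<forall>x\<in>S. f n x = - f' n x) F" "\<And>x. x \<in> S \<Longrightarrow> g x = - g' x"
  shows "uniform_limit S f g F \<longleftrightarrow> uniform_limit S f' g' F"
proof -
  have "uniform_limit S f g F \<longleftrightarrow> uniform_limit S (\<lambda>n x. - f' n x) (\<lambda>x. - g' x) F"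
    using assms by (rule uniform_limit_cong)
  then show ?thesis by (simp add: uniform_limit_iff dist_minus)
qed

lemma not_uniform_limitI:
  fixes f :: "'a \<Rightarrow> 'b \<Rightarrow> 'c::metric_space"
  assumes "F \<noteq> bot" "0 < e" "eventually (\<lambda>n. \<exists>x\<in>S. e \<le> dist (f n x) (g x)) F"
  shows "\<not> uniform_limit S f g F"
proof
  assume "uniform_limit S f g F"
  from uniform_limitD[OF this assms(2)] assms(3) have "eventually (\<lambda>n. False) F"
    by eventually_elim (meson leD)
  with assms(1) show False by simp
qed

lemma uniformly_continuous_on_ellipse:
  fixes a b :: real
  shows "uniformly_continuous_on S (\<lambda>x. (a * sin x, b * cos x))"
proof (rule lipschitz_on_uniformly_continuous)
  show "(\<bar>a\<bar> + \<bar>b\<bar>)-lipschitz_on S (\<lambda>x. (a * sin x, b * cos x))"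
  proof (rule lipschitz_onI)
    fix x y :: real
    have sin: "\<bar>sin x - sin y\<bar> \<le> \<bar>x - y\<bar>" and cos: "\<bar>cos x - cos y\<bar> \<le> \<bar>x - y\<bar>"
      using abs_diff_le_of_DERIV_bound[OF DERIV_sin, of 1 x y]
        abs_diff_le_of_DERIV_bound[OF DERIV_cos, of 1 x y] by auto
    have "dist (a * sin x, b * cos x) (a * sin y, b * cos y)
        \<le> \<bar>a * sin x - a * sin y\<bar> + \<bar>b * cos x - b * cos y\<bar>"
      using sqrt_sum_squares_le_sum_abs by (simp add: dist_Pair_Pair dist_real_def)
    also have "\<dots> = \<bar>a\<bar> * \<bar>sin x - sin y\<bar> + \<bar>b\<bar> * \<bar>cos x - cos y\<bar>"
      by (simp add: abs_mult flip: right_diff_distrib)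
    also have "\<dots> \<le> \<bar>a\<bar> * dist x y + \<bar>b\<bar> * dist x y"
      using sin cos by (intro add_mono mult_left_mono) (auto simp: dist_real_def)
    finally show "dist (a * sin x, b * cos x) (a * sin y, b * cos y) \<le> (\<bar>a\<bar> + \<bar>b\<bar>) * dist x y"
      by (simp add: distrib_right)
  qed simp
qed

definition sn_cn_orbit :: "real \<Rightarrow> real \<Rightarrow> real \<Rightarrow> real \<Rightarrow> real \<times> real" where
  "sn_cn_orbit a b k t = (a * jsn t k, b * jcn t k)"

definition tanh_sech_orbit :: "real \<Rightarrow> real \<Rightarrow> real \<Rightarrow> real \<times> real" where
  "tanh_sech_orbit a b s = (a * tanh s, b / cosh s)"

lemma sn_cn_orbit_add_two_ellK:
  "\<bar>k\<bar> < 1 \<Longrightarrow> sn_cn_orbit a b k (t + 2 * ellK k) = - sn_cn_orbit a b k t"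
  by (simp add: sn_cn_orbit_def jsn_add_two_ellK jcn_add_two_ellK)

lemma uniform_limit_sn_cn_orbit:
  fixes k s :: "'a \<Rightarrow> real"
  assumes "(k \<longlongrightarrow> 1) F" "eventually (\<lambda>n. \<bar>k n\<bar> < 1) F" "(s \<longlongrightarrow> s0) F" "compact C"
  shows "uniform_limit C (\<lambda>n t. sn_cn_orbit a b (k n) (t + s n)) (\<lambda>t. tanh_sech_orbit a b (t + s0)) F"
  using uniform_limit_compose_uniformly_continuous_on[OF uniform_limit_jam_shift_gd[OF assms]
      uniformly_continuous_on_ellipse[of UNIV a b]]
  by (simp add: sn_cn_orbit_def tanh_sech_orbit_def jsn_def jcn_def sin_gd cos_gd)

lemma not_uniform_limit_sn_cn_orbit:
  fixes k s :: "'a \<Rightarrow> real"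
  assumes "F \<noteq> bot" "0 < a" "eventually (\<lambda>n. \<bar>k n\<bar> < 1 \<and> s n - s0 \<le> 3 * ellK (k n)) F"
  shows "\<not> uniform_limit UNIV (\<lambda>n t. sn_cn_orbit a b (k n) (t + s n)) (\<lambda>t. tanh_sech_orbit a b (t + s0)) F"
proof (rule not_uniform_limitI[OF assms(1,2)])
  show "eventually (\<lambda>n. \<exists>t\<in>UNIV. a \<le> dist (sn_cn_orbit a b (k n) (t + s n)) (tanh_sech_orbit a b (t + s0))) F"
    using assms(3)
  proof eventually_elim
    case (elim n)
    define t where "t = 3 * ellK (k n) - s n"
    have "t + s n = ellK (k n) + 2 * ellK (k n)" by (simp add: t_def)
    then have "jsn (t + s n) (k n) = -1"
      using jsn_add_two_ellK[of "k n" "ellK (k n)"] jsn_ellK[of "k n"] elim by simp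
    moreover have "0 \<le> a * tanh (t + s0)" using elim assms(2) by (simp add: t_def)
    ultimately have "a \<le> dist (a * jsn (t + s n) (k n)) (a * tanh (t + s0))"
      using abs_ge_minus_self[of "- a - a * tanh (t + s0)"] by (simp add: dist_real_def)
    also have "\<dots> \<le> dist (sn_cn_orbit a b (k n) (t + s n)) (tanh_sech_orbit a b (t + s0))"
      using dist_fst_le[of "sn_cn_orbit a b (k n) (t + s n)" "tanh_sech_orbit a b (t + s0)"]
      by (simp add: sn_cn_orbit_def tanh_sech_orbit_def)
    finally show ?case by blast
  qed
qed

section \<open>The modulus and the shift \<open>\<zeta>\<close>\<close>

lemma modulus_bounds:
  fixes a b l :: real
  assumes "0 < l" "l < b" "b < a"
  shows "0 < sqrt ((a\<^sup>2 - b\<^sup>2) / (a\<^sup>2 - l\<^sup>2)) \<and> sqrt ((a\<^sup>2 - b\<^sup>2) / (a\<^sup>2 - l\<^sup>2)) < 1"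
proof -
  have "l\<^sup>2 < b\<^sup>2" "b\<^sup>2 < a\<^sup>2" using assms by (auto intro: power_strict_mono)
  then show ?thesis by (simp add: divide_less_eq)
qed

lemma tendsto_modulus:
  fixes a b :: real
  assumes "0 < b" "b < a"
  shows "((\<lambda>l. sqrt ((a\<^sup>2 - b\<^sup>2) / (a\<^sup>2 - l\<^sup>2))) \<longlongrightarrow> 1) (at_left b)"
proof -
  have "b\<^sup>2 < a\<^sup>2" using assms by (auto intro: power_strict_mono)
  then have "((\<lambda>l. sqrt ((a\<^sup>2 - b\<^sup>2) / (a\<^sup>2 - l\<^sup>2))) \<longlongrightarrow> sqrt ((a\<^sup>2 - b\<^sup>2) / (a\<^sup>2 - b\<^sup>2))) (at_left b)"
    by (intro tendsto_intros) auto
  with \<open>b\<^sup>2 < a\<^sup>2\<close> show ?thesis by simp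
qed

lemma ellK_minus_ellF_arcsin:
  fixes a b l :: real
  assumes "0 < l" "l < b" "b < a"
  defines "k \<equiv> sqrt ((a\<^sup>2 - b\<^sup>2) / (a\<^sup>2 - l\<^sup>2))"
  shows "ellK k - ellF k (arcsin (l / b)) = ellF k (gd (arsinh (sqrt (a\<^sup>2 - l\<^sup>2) / l)))"
proof -
  define \<phi> where "\<phi> = arcsin (l / b)"
  have k: "\<bar>k\<bar> < 1" using modulus_bounds[OF assms(1-3)] by (simp add: k_def)
  have lb: "0 < l / b" "l / b < 1" using assms by auto
  have \<phi>: "\<bar>\<phi>\<bar> < pi/2" using arcsin_lt_bounded[of "l / b"] lb by (auto simp: \<phi>_def)
  have lt: "l\<^sup>2 < b\<^sup>2" "b\<^sup>2 < a\<^sup>2" using assms by (auto intro: power_strict_mono)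
  have "sqrt (1 - k\<^sup>2) * tan \<phi> = l / sqrt (a\<^sup>2 - l\<^sup>2)"
  proof -
    have e1: "1 - k\<^sup>2 = (b\<^sup>2 - l\<^sup>2) / (a\<^sup>2 - l\<^sup>2)" using lt by (simp add: k_def field_simps)
    have e2: "1 - (l / b)\<^sup>2 = (b\<^sup>2 - l\<^sup>2) / b\<^sup>2" using assms by (simp add: field_simps)
    have b: "sqrt (b\<^sup>2 - l\<^sup>2) > 0" "sqrt (b\<^sup>2) = b" using lt assms by auto
    have "sin \<phi> = l / b" unfolding \<phi>_def using lb by simp
    moreover have "cos \<phi> = sqrt (1 - (l / b)\<^sup>2)" unfolding \<phi>_def using lb by (intro cos_arcsin) auto
    then have "cos \<phi> = sqrt (b\<^sup>2 - l\<^sup>2) / b" using assms by (simp add: e2 real_sqrt_divide)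
    ultimately have "tan \<phi> = l / sqrt (b\<^sup>2 - l\<^sup>2)"
      using assms(1,2) b(1) by (simp add: tan_def)
    moreover have "sqrt (1 - k\<^sup>2) = sqrt (b\<^sup>2 - l\<^sup>2) / sqrt (a\<^sup>2 - l\<^sup>2)"
      by (simp add: e1 real_sqrt_divide)
    ultimately show ?thesis using b(1) by simp
  qed
  moreover have "pi/2 - arctan (l / sqrt (a\<^sup>2 - l\<^sup>2)) = gd (arsinh (sqrt (a\<^sup>2 - l\<^sup>2) / l))"
    using arctan_inverse[of "l / sqrt (a\<^sup>2 - l\<^sup>2)"] lt assms(1) by (simp add: gd_arsinh)
  ultimately show ?thesis
    using ellF_complement[OF k \<phi>] by (simp add: \<phi>_def)
qed

lemma tendsto_two_ellK_minus_shift: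
  fixes a b h :: real and k \<delta> :: "real \<Rightarrow> real"
  assumes ab: "0 < b" "b < a" and h: "sinh (h/2) = sqrt (a\<^sup>2 - b\<^sup>2) / b"
    and k_def: "\<And>l. k l = sqrt ((a\<^sup>2 - b\<^sup>2) / (a\<^sup>2 - l\<^sup>2))"
    and \<delta>: "\<And>l. 0 < l \<Longrightarrow> l < b \<Longrightarrow> 0 < \<delta> l \<and> \<delta> l < 2 * ellK (k l) \<and> jsn (\<delta> l / 2) (k l) = l / b"
  shows "((\<lambda>l. 2 * ellK (k l) - \<delta> l) \<longlongrightarrow> h) (at_left b)"
proof -
  define \<tau> where "\<tau> l = arsinh (sqrt (a\<^sup>2 - l\<^sup>2) / l)" for l
  have k_lim: "(k \<longlongrightarrow> 1) (at_left b)"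
    using tendsto_modulus[OF ab] by (simp add: k_def[abs_def])
  have "eventually (\<lambda>l. 0 < l \<and> l < b) (at_left b)"
    using eventually_at_left_real[OF ab(1)] by (rule eventually_mono) auto
  then have ev: "eventually (\<lambda>l. \<bar>k l\<bar> < 1
      \<and> 2 * ellK (k l) - \<delta> l = 2 * ellF (k l) (gd (\<tau> l))) (at_left b)"
  proof eventually_elim
    case (elim l)
    have k: "\<bar>k l\<bar> < 1" using modulus_bounds[of l b a] elim ab by (simp add: k_def)
    have "\<bar>\<delta> l / 2\<bar> \<le> ellK (k l)" using \<delta>[of l] elim by simp
    from ellF_arcsin_jsn[OF k this] have "\<delta> l / 2 = ellF (k l) (arcsin (l / b))"
      using \<delta>[of l] elim by simp
    then show ?case using k ellK_minus_ellF_arcsin[of l b a] elim ab by (simp add: k_def \<tau>_def)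
  qed
  have "(\<tau> \<longlongrightarrow> arsinh (sqrt (a\<^sup>2 - b\<^sup>2) / b)) (at_left b)"
    unfolding \<tau>_def using ab by (intro tendsto_intros) auto
  then have "(\<tau> \<longlongrightarrow> h/2) (at_left b)"
    by (metis h arsinh_sinh_real)
  then have "((\<lambda>l. 2 * ellF (k l) (gd (\<tau> l))) \<longlongrightarrow> 2 * (h/2)) (at_left b)"
    using ev by (intro tendsto_mult tendsto_const tendsto_ellF_gd[OF k_lim]) (auto elim: eventually_mono)
  moreover have "eventually (\<lambda>l. 2 * ellK (k l) - \<delta> l = 2 * ellF (k l) (gd (\<tau> l))) (at_left b)"
    using ev by (rule eventually_mono) simp
  ultimately show ?thesis using tendsto_cong by fastforce
qed

theorem lemma3:
  fixes a b c h :: real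
    and k K K' \<delta> \<zeta> :: "real \<Rightarrow> real"
    and qt :: "real \<Rightarrow> real \<Rightarrow> real \<times> real"
    and qh :: "real \<Rightarrow> real \<times> real"
  assumes ab: "0 < b" "b < a"
    and c_def: "c = sqrt (a\<^sup>2 - b\<^sup>2)"
    and h_pos: "h > 0" and h_def: "sinh (h/2) = c / b"
    and k_def: "\<And>l. k l = sqrt ((a\<^sup>2 - b\<^sup>2) / (a\<^sup>2 - l\<^sup>2))"
    and K_def: "\<And>l. K l = ellK (k l)"
    and K'_def: "\<And>l. K' l = ellK (sqrt (1 - (k l)\<^sup>2))"
    and \<delta>_prop: "\<And>l. 0 < l \<Longrightarrow> l < b \<Longrightarrow>
                   0 < \<delta> l \<and> \<delta> l < 2 * K l \<and> jsn (\<delta> l / 2) (k l) = l / b"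
    and \<zeta>_def: "\<And>l. \<zeta> l = 2 * K l - \<delta> l"
    and qt_def: "\<And>l t. qt l t = (a * jsn t (k l), b * jcn t (k l))"
    and qh_def: "\<And>s. qh s = (a * tanh s, b / cosh s)"
  shows "((k \<longlongrightarrow> 1) (at_left b))
    \<and> (filterlim K at_top (at_left b))
    \<and> ((K' \<longlongrightarrow> pi / 2) (at_left b))
    \<and> ((\<zeta> \<longlongrightarrow> h) (at_left b))
    \<and> (\<forall>C. compact C \<longrightarrow> uniform_limit C qt qh (at_left b))
    \<and> (\<forall>C. compact C \<longrightarrow>
           uniform_limit C (\<lambda>l t. qt l (t + \<delta> l)) (\<lambda>t. - qh (t - h)) (at_left b))
    \<and> (\<forall>C. compact C \<longrightarrow>
           uniform_limit C (\<lambda>l t. qt l (t - \<delta> l)) (\<lambda>t. - qh (t + h)) (at_left b))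
    \<and> (\<not> uniform_limit UNIV qt qh (at_left b))
    \<and> (\<not> uniform_limit UNIV (\<lambda>l t. qt l (t + \<delta> l)) (\<lambda>t. - qh (t - h)) (at_left b))
    \<and> (\<not> uniform_limit UNIV (\<lambda>l t. qt l (t - \<delta> l)) (\<lambda>t. - qh (t + h)) (at_left b))"
proof -
  have qt_eq: "qt = (\<lambda>l. sn_cn_orbit a b (k l))" and qh_eq: "qh = tanh_sech_orbit a b"
    by (simp_all add: fun_eq_iff qt_def qh_def sn_cn_orbit_def tanh_sech_orbit_def)
  have ev: "eventually (\<lambda>l. 0 < l \<and> l < b) (at_left b)"
    using eventually_at_left_real[OF ab(1)] by (rule eventually_mono) auto
  have k_ev: "eventually (\<lambda>l. \<bar>k l\<bar> < 1) (at_left b)"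
    using ev by eventually_elim (use modulus_bounds[of _ b a] ab k_def in auto)
  have k_lim: "(k \<longlongrightarrow> 1) (at_left b)"
    using tendsto_modulus[OF ab] by (simp add: k_def[abs_def])
  have K_lim: "filterlim K at_top (at_left b)"
    using ellK_tendsto_at_top[OF k_lim k_ev] by (simp add: K_def[abs_def])
  have \<zeta>_lim: "(\<zeta> \<longlongrightarrow> h) (at_left b)"
    using tendsto_two_ellK_minus_shift[OF ab h_def[unfolded c_def] k_def] \<delta>_prop
    by (simp add: \<zeta>_def[abs_def] K_def)
  have local: "uniform_limit C (\<lambda>l t. qt l (t + s l)) (\<lambda>t. qh (t + s0)) (at_left b)"
    if "compact C" "(s \<longlongrightarrow> s0) (at_left b)" for C s s0
    unfolding qt_eq qh_eq using k_lim k_ev that(2,1) by (rule uniform_limit_sn_cn_orbit)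
  have global: "\<not> uniform_limit UNIV (\<lambda>l t. qt l (t + s l)) (\<lambda>t. qh (t + s0)) (at_left b)"
    if "eventually (\<lambda>l. s l - s0 \<le> 3 * K l) (at_left b)" for s s0
    unfolding qt_eq qh_eq using k_ev that ab
    by (intro not_uniform_limit_sn_cn_orbit) (auto simp: K_def elim: eventually_elim2)
  have "eventually (\<lambda>l. h \<le> K l) (at_left b)"
    using K_lim by (simp add: filterlim_at_top)
  with ev have far: "eventually (\<lambda>l. 0 \<le> K l \<and> h - \<zeta> l \<le> 3 * K l \<and> \<zeta> l - h \<le> 3 * K l) (at_left b)"
  proof eventually_elim
    case (elim l)
    then show ?case using \<delta>_prop[of l] h_pos by (simp add: \<zeta>_def)
  qed
  have shift: "eventually (\<lambda>l. \<forall>t. qt l (t + \<delta> l) = - qt l (t + - \<zeta> l) \<and> qt l (t - \<delta> l) = - qt l (t + \<zeta> l))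
      (at_left b)"
    using k_ev
  proof eventually_elim
    case (elim l)
    have "qt l (t + \<delta> l) = - qt l (t + - \<zeta> l)" "qt l (t + \<zeta> l) = - qt l (t - \<delta> l)" for t
    proof -
      have "qt l (t + \<delta> l) = qt l ((t + - \<zeta> l) + 2 * ellK (k l))"
        "qt l (t + \<zeta> l) = qt l ((t - \<delta> l) + 2 * ellK (k l))"
        by (simp_all add: \<zeta>_def K_def algebra_simps)
      then show "qt l (t + \<delta> l) = - qt l (t + - \<zeta> l)" "qt l (t + \<zeta> l) = - qt l (t - \<delta> l)"
        unfolding qt_eq sn_cn_orbit_add_two_ellK[OF elim] by simp_all
    qed
    then show ?case by (simp add: minus_equation_iff)
  qed
  have plus: "uniform_limit S (\<lambda>l t. qt l (t + \<delta> l)) (\<lambda>t. - qh (t - h)) (at_left b)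
      \<longleftrightarrow> uniform_limit S (\<lambda>l t. qt l (t + - \<zeta> l)) (\<lambda>t. qh (t + - h)) (at_left b)"
    and minus: "uniform_limit S (\<lambda>l t. qt l (t - \<delta> l)) (\<lambda>t. - qh (t + h)) (at_left b)
      \<longleftrightarrow> uniform_limit S (\<lambda>l t. qt l (t + \<zeta> l)) (\<lambda>t. qh (t + h)) (at_left b)" for S
    using shift by (auto intro!: uniform_limit_uminus_cong elim: eventually_mono)
  show ?thesis
  proof (intro conjI allI impI)
    show "(K' \<longlongrightarrow> pi / 2) (at_left b)"
      using ellK_complementary_tendsto[OF k_lim k_ev] by (simp add: K'_def[abs_def])
    show "uniform_limit C qt qh (at_left b)" if "compact C" for C
      using local[OF that tendsto_const[of 0]] by simp
    show "uniform_limit C (\<lambda>l t. qt l (t + \<delta> l)) (\<lambda>t. - qh (t - h)) (at_left b)" if "compact C" for C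
      unfolding plus using local[OF that tendsto_minus[OF \<zeta>_lim]] .
    show "uniform_limit C (\<lambda>l t. qt l (t - \<delta> l)) (\<lambda>t. - qh (t + h)) (at_left b)" if "compact C" for C
      unfolding minus using local[OF that \<zeta>_lim] .
    show "\<not> uniform_limit UNIV qt qh (at_left b)"
      using global[of "\<lambda>_. 0" 0] far by (simp add: eventually_mono)
    show "\<not> uniform_limit UNIV (\<lambda>l t. qt l (t + \<delta> l)) (\<lambda>t. - qh (t - h)) (at_left b)"
      unfolding plus using global[of "\<lambda>l. - \<zeta> l" "- h"] far by (simp add: eventually_mono)
    show "\<not> uniform_limit UNIV (\<lambda>l t. qt l (t - \<delta> l)) (\<lambda>t. - qh (t + h)) (at_left b)"
      unfolding minus using global[of \<zeta> h] far by (simp add: eventually_mono)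
  qed (fact k_lim K_lim \<zeta>_lim)+
qed

end
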